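(* Let $(X_1,\dots,X_M)$ have density $f\in\mathrm{MMEam}$ of the form $f(x_1,\dots,x_M)=\sum_{\mathbf i\in\mathscr S}p_{\mathbf i}f_{i_1}(x_1)\cdots f_{i_M}(x_M)$, let $\mathbf z=(z_1,\dots,z_M)\in[0,\infty)^M$ with $\mathbb P(X_1>z_1,\dots,X_M>z_M)>0$, and let $r_1,\dots,r_M\in\mathbb N_0$. Then $$\mathbb E\Big[\prod_{j=1}^M(X_j-z_j)^{r_j}\,\Big|\,X_1>z_1,\dots,X_M>z_M\Big]=\sum_{\mathbf i\in\mathscr S}p^{\mathrm{RL}}_{\mathbf z,\mathbf i}\prod_{j=1}^M r_j!\,\alpha^{\mathrm{RL}}_{z_j,i_j}(-T_{i_j})^{-(r_j+1)}t_{i_j},$$ where $\alpha^{\mathrm{RL}}_{z,k}=\alpha_ke^{T_kz}/(\alpha_ke^{T_kz}l_k)$ for $z\ge0$, $1\le k\le L$, and $$p^{\mathrm{RL}}_{\mathbf z,\mathbf i}=\frac{p_{\mathbf i}\prod_{j=1}^M(\alpha_{i_j}e^{T_{i_j}z_j}l_{i_j})}{\sum_{\mathbf h\in\mathscr S}p_{\mathbf h}\prod_{j=1}^M(\alpha_{h_j}e^{T_{h_j}z_j}l_{h_j})}.$$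
   Context: An ME density is a probability density on $[0,\infty)$ of the form $g(x)=\alpha e^{Tx}t$ ($\alpha$ real row vector, $T$ real square matrix, $t$ real column vector); triples are taken with all eigenvalues of $T$ having strictly negative real part, so $T$ is invertible; $l=(-T)^{-1}t$ and the survival function is $\alpha e^{Tx}l$. MMEam: fix $L,M\in\mathbb N_+$ and ME densities $f_1,\dots,f_L$ with triples $(\alpha_j,T_j,t_j)$, $l_j=(-T_j)^{-1}t_j$. Let $\mathscr S=\{1,\dots,L\}^M$, $\mathbf i=(i_1,\dots,i_M)$, and real numbers $p_{\mathbf i}$ (possibly negative) with $\sum p_{\mathbf i}=1$; $f(x)=\sum_{\mathbf i}p_{\mathbf i}f_{i_1}(x_1)\cdots f_{i_M}(x_M)$ on $[0,\infty)^M$ is an MMEam density if $f\ge0$. *)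

theory Defs
  imports "HOL-Probability.Probability" "Jordan_Normal_Form.Matrix" "Jordan_Normal_Form.Char_Poly"
begin

definition mat_exp :: "real mat \<Rightarrow> real mat" where
  "mat_exp A = mat (dim_row A) (dim_col A) (\<lambda>(i,j). \<Sum>k. (A ^\<^sub>m k) $$ (i,j) / fact k)"

definition row_mult :: "real vec \<Rightarrow> real mat \<Rightarrow> real vec" where
  "row_mult a A = vec (dim_col A) (\<lambda>j. scalar_prod a (col A j))"

definition minv :: "real mat \<Rightarrow> real mat" where
  "minv A = (THE B. B \<in> carrier_mat (dim_row A) (dim_row A) \<and>
                    A * B = 1\<^sub>m (dim_row A) \<and> B * A = 1\<^sub>m (dim_row A))"

definition me_row :: "real vec \<Rightarrow> real mat \<Rightarrow> real \<Rightarrow> real vec" where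
  "me_row a T x = row_mult a (mat_exp (x \<cdot>\<^sub>m T))"

definition me_fun :: "real vec \<Rightarrow> real mat \<Rightarrow> real vec \<Rightarrow> real \<Rightarrow> real" where
  "me_fun a T t x = scalar_prod (me_row a T x) t"

definition me_l :: "real mat \<Rightarrow> real vec \<Rightarrow> real vec" where
  "me_l T t = minv (- T) *\<^sub>v t"

definition ME_triple :: "nat \<Rightarrow> real vec \<Rightarrow> real mat \<Rightarrow> real vec \<Rightarrow> bool" where
  "ME_triple n a T t \<longleftrightarrow>
     a \<in> carrier_vec n \<and> T \<in> carrier_mat n n \<and> t \<in> carrier_vec n \<and>
     (\<forall>ev. eigenvalue (map_mat complex_of_real T) ev \<longrightarrow> Re ev < 0) \<and>
     (\<forall>x\<ge>0. me_fun a T t x \<ge> 0) \<and>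
     (me_fun a T t has_integral 1) {0..}"

text \<open>Index set S = {0..<L}^M (0-based), index vectors as functions on {0..<M}.\<close>
definition idx_set :: "nat \<Rightarrow> nat \<Rightarrow> (nat \<Rightarrow> nat) set" where
  "idx_set L M = PiE {..<M} (\<lambda>_. {..<L})"

definition mmeam_fun ::
  "nat \<Rightarrow> nat \<Rightarrow> ((nat \<Rightarrow> nat) \<Rightarrow> real) \<Rightarrow> (nat \<Rightarrow> real vec) \<Rightarrow> (nat \<Rightarrow> real mat)
     \<Rightarrow> (nat \<Rightarrow> real vec) \<Rightarrow> (nat \<Rightarrow> real) \<Rightarrow> real" where
  "mmeam_fun L M p a T t x =
     (if \<forall>j<M. 0 \<le> x j
      then \<Sum>i\<in>idx_set L M. p i * (\<Prod>j<M. me_fun (a (i j)) (T (i j)) (t (i j)) (x j))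
      else 0)"

definition cond_exp_event :: "'a measure \<Rightarrow> ('a \<Rightarrow> real) \<Rightarrow> 'a set \<Rightarrow> real" where
  "cond_exp_event P Y A = (\<integral>\<omega>. indicator A \<omega> * Y \<omega> \<partial>P) / measure P A"

definition alpha_RL :: "real vec \<Rightarrow> real mat \<Rightarrow> real vec \<Rightarrow> real \<Rightarrow> real vec" where
  "alpha_RL a T t z = (1 / scalar_prod (me_row a T z) (me_l T t)) \<cdot>\<^sub>v me_row a T z"

definition p_RL ::
  "nat \<Rightarrow> nat \<Rightarrow> ((nat \<Rightarrow> nat) \<Rightarrow> real) \<Rightarrow> (nat \<Rightarrow> real vec) \<Rightarrow> (nat \<Rightarrow> real mat)
     \<Rightarrow> (nat \<Rightarrow> real vec) \<Rightarrow> (nat \<Rightarrow> real) \<Rightarrow> (nat \<Rightarrow> nat) \<Rightarrow> real" where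
  "p_RL L M p a T t z i =
     p i * (\<Prod>j<M. scalar_prod (me_row (a (i j)) (T (i j)) (z j)) (me_l (T (i j)) (t (i j))))
     / (\<Sum>h\<in>idx_set L M. p h *
          (\<Prod>j<M. scalar_prod (me_row (a (h j)) (T (h j)) (z j)) (me_l (T (h j)) (t (h j)))))"

end

theory Submission
  imports Defs "Jordan_Normal_Form.Spectral_Radius"
begin

text \<open>
  On the orthant where all x_j > z_j the weight prod_j (x_j - z_j)^r_j factorises, and so does each
  term p_i f_i1(x_1) ... f_iM(x_M) of the density, so E[1{X > z} prod_j (X_j - z_j)^r_j] is a signed
  sum of products of one-dimensional truncated moments int_z^oo (x - z)^r alpha e^(Tx) t dx.
  Since -alpha e^(Tx) (-T)^-1 v is an antiderivative of alpha e^(Tx) v, r integrations by parts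
  evaluate such a moment as r! alpha e^(Tz) (-T)^-(r+1) t; the boundary terms at infinity vanish
  because e^(Tx) decays exponentially when all eigenvalues of T have negative real part (for large c
  the matrix D = T/c + 1 has spectral radius below 1, and e^(Tx) = e^(-cx) e^(cxD)). The case r = 0
  is P(X > z), and dividing gives the formula. A factor whose survival value alpha e^(Tz) l vanishes
  contributes zero on both sides, since the corresponding density is then a.e. zero beyond z.
\<close>

section \<open>Entrywise power series of the matrix exponential\<close>

lemma pow_smult_mat:
  fixes A :: "'a::comm_ring_1 mat"
  assumes A: "A \<in> carrier_mat n n"
  shows "(x \<cdot>\<^sub>m A) ^\<^sub>m k = x ^ k \<cdot>\<^sub>m A ^\<^sub>m k"
proof (induction k)
  case 0
  show ?case by (auto intro!: eq_matI)
next
  case (Suc k)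
  then show ?case
    using A by (auto intro!: eq_matI simp: mult_smult_distrib[of _ n n _ n] mult_smult_assoc_mat[of _ n n _ n])
qed

lemma abs_pow_mat_entry_le:
  fixes A :: "real mat"
  assumes A: "A \<in> carrier_mat n n" and b: "\<And>i j. i < n \<Longrightarrow> j < n \<Longrightarrow> \<bar>A $$ (i,j)\<bar> \<le> b"
    and i: "i < n" and j: "j < n"
  shows "\<bar>(A ^\<^sub>m k) $$ (i,j)\<bar> \<le> (real n * b) ^ k"
  using j
proof (induction k arbitrary: j)
  case 0
  then show ?case using A i by simp
next
  case (Suc k)
  have b0: "0 \<le> b" using b[OF i i] by linarith
  have "\<bar>(A ^\<^sub>m Suc k) $$ (i,j)\<bar> = \<bar>\<Sum>l<n. (A ^\<^sub>m k) $$ (i,l) * A $$ (l,j)\<bar>"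
    using A i Suc.prems by (simp add: scalar_prod_def atLeast0LessThan)
  also have "\<dots> \<le> (\<Sum>l<n. \<bar>(A ^\<^sub>m k) $$ (i,l)\<bar> * \<bar>A $$ (l,j)\<bar>)"
    by (rule order_trans[OF sum_abs]) (simp add: abs_mult)
  also have "\<dots> \<le> (\<Sum>l<n. (real n * b) ^ k * b)"
    using Suc b b0 by (intro sum_mono mult_mono) auto
  also have "\<dots> = (real n * b) ^ Suc k" by (simp add: algebra_simps)
  finally show ?case .
qed

lemma summable_mat_exp_series:
  fixes A :: "real mat"
  assumes A: "A \<in> carrier_mat n n" and i: "i < n" and j: "j < n"
  shows "summable (\<lambda>k. \<bar>(A ^\<^sub>m k) $$ (i,j) / fact k * x ^ k\<bar>)"
proof -
  define b where "b = (\<Sum>i<n. \<Sum>j<n. \<bar>A $$ (i,j)\<bar>)"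
  have b: "\<bar>A $$ (i,j)\<bar> \<le> b" if "i < n" "j < n" for i j
    unfolding b_def using that
    by (intro order_trans[OF _ member_le_sum[of i]] member_le_sum[of j]) (auto intro: sum_nonneg)
  have "\<bar>(A ^\<^sub>m k) $$ (i,j) / fact k * x ^ k\<bar> \<le> (real n * b * \<bar>x\<bar>) ^ k / fact k" for k
    using abs_pow_mat_entry_le[OF A b i j, of k]
    by (simp add: abs_mult power_abs power_mult_distrib divide_right_mono mult_right_mono)
  then show ?thesis
    by (intro summable_comparison_test'[OF summable_exp_generic[of "real n * b * \<bar>x\<bar>"]])
      (simp add: divide_inverse mult.commute)
qed

lemma mat_exp_smult_entry_sums:
  fixes A :: "real mat"
  assumes A: "A \<in> carrier_mat n n" and i: "i < n" and j: "j < n"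
  shows "(\<lambda>k. (A ^\<^sub>m k) $$ (i,j) / fact k * x ^ k) sums mat_exp (x \<cdot>\<^sub>m A) $$ (i,j)"
proof -
  have "((x \<cdot>\<^sub>m A) ^\<^sub>m k) $$ (i,j) / fact k = (A ^\<^sub>m k) $$ (i,j) / fact k * x ^ k" for k
    using A i j by (simp add: pow_smult_mat[OF A])
  then have "mat_exp (x \<cdot>\<^sub>m A) $$ (i,j) = (\<Sum>k. (A ^\<^sub>m k) $$ (i,j) / fact k * x ^ k)"
    using A i j unfolding mat_exp_def by simp
  then show ?thesis
    using summable_rabs_cancel[OF summable_mat_exp_series[OF A i j]] by (simp add: summable_sums)
qed

lemma exp_converges_real: "(\<lambda>n. x ^ n / fact n) sums exp (x::real)"
  using exp_converges[of x] by (simp add: divide_inverse mult.commute)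

lemma binomial_transform_Suc:
  fixes t :: "'a::comm_semiring_1" and e :: "nat \<Rightarrow> 'a"
  shows "(\<Sum>m\<le>Suc k. of_nat (Suc k choose m) * t ^ (Suc k - m) * e m)
       = (\<Sum>m\<le>k. of_nat (k choose m) * t ^ (k - m) * e (Suc m))
         + t * (\<Sum>m\<le>k. of_nat (k choose m) * t ^ (k - m) * e m)"
proof -
  have "t * (\<Sum>m\<le>k. of_nat (k choose m) * t ^ (k - m) * e m)
      = (\<Sum>m\<le>Suc k. of_nat (k choose m) * t ^ (Suc k - m) * e m)"
    by (simp add: sum_distrib_left Suc_diff_le binomial_eq_0 mult_ac)
  also have "\<dots> = t ^ Suc k * e 0 + (\<Sum>m\<le>k. of_nat (k choose Suc m) * t ^ (k - m) * e (Suc m))"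
    by (subst sum.atMost_Suc_shift) simp
  finally show ?thesis
    by (subst sum.atMost_Suc_shift) (simp add: sum.distrib algebra_simps)
qed

lemma pow_mat_add_scalar_entry:
  fixes A :: "'a::comm_ring_1 mat"
  assumes A: "A \<in> carrier_mat n n" and i: "i < n" and j: "j < n"
  shows "((A + t \<cdot>\<^sub>m 1\<^sub>m n) ^\<^sub>m k) $$ (i,j)
       = (\<Sum>m\<le>k. of_nat (k choose m) * t ^ (k - m) * (A ^\<^sub>m m) $$ (i,j))"
  using j
proof (induction k arbitrary: j)
  case 0
  then show ?case using A i by simp
next
  case (Suc k)
  let ?B = "A + t \<cdot>\<^sub>m 1\<^sub>m n"
  have "(?B ^\<^sub>m Suc k) $$ (i,j) = (\<Sum>l<n. (?B ^\<^sub>m k) $$ (i,l) * (A $$ (l,j) + t * (if l = j then 1 else 0)))"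
    using A i Suc.prems by (simp add: scalar_prod_def atLeast0LessThan)
  also have "\<dots> = (\<Sum>l<n. (?B ^\<^sub>m k) $$ (i,l) * A $$ (l,j)) + t * (?B ^\<^sub>m k) $$ (i,j)"
    using Suc.prems by (simp add: distrib_left sum.distrib sum.remove[of _ j] mult.commute)
  also have "(\<Sum>l<n. (?B ^\<^sub>m k) $$ (i,l) * A $$ (l,j))
      = (\<Sum>m\<le>k. of_nat (k choose m) * t ^ (k - m) * (\<Sum>l<n. (A ^\<^sub>m m) $$ (i,l) * A $$ (l,j)))"
    using Suc.IH by (simp add: sum_distrib_left sum_distrib_right mult_ac sum.swap[of _ "{..<n}"])
  also have "\<dots> = (\<Sum>m\<le>k. of_nat (k choose m) * t ^ (k - m) * (A ^\<^sub>m Suc m) $$ (i,j))"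
    using A i Suc.prems by (simp add: scalar_prod_def atLeast0LessThan)
  finally show ?case
    using Suc.IH[OF Suc.prems] binomial_transform_Suc[of k t "\<lambda>m. (A ^\<^sub>m m) $$ (i,j)"] by simp
qed

lemma mat_exp_add_scalar_entry:
  fixes A :: "real mat"
  assumes A: "A \<in> carrier_mat n n" and i: "i < n" and j: "j < n"
  shows "mat_exp (x \<cdot>\<^sub>m (A + s \<cdot>\<^sub>m 1\<^sub>m n)) $$ (i,j) = mat_exp (x \<cdot>\<^sub>m A) $$ (i,j) * exp (s * x)"
proof -
  define a where "a m = (A ^\<^sub>m m) $$ (i,j) / fact m * x ^ m" for m
  define b where "b l = (s * x) ^ l / fact l" for l
  have a: "a sums mat_exp (x \<cdot>\<^sub>m A) $$ (i,j)"
    unfolding a_def by (rule mat_exp_smult_entry_sums[OF A i j])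
  have b: "b sums exp (s * x)"
    unfolding b_def by (rule exp_converges_real)
  have "summable (\<lambda>l. norm (b l))"
    using exp_converges_real[of "\<bar>s * x\<bar>"] by (simp add: b_def sums_iff abs_mult power_abs)
  moreover have "summable (\<lambda>m. norm (a m))"
    unfolding a_def real_norm_def by (rule summable_mat_exp_series[OF A i j])
  ultimately have "(\<lambda>k. \<Sum>m\<le>k. a m * b (k - m)) sums (mat_exp (x \<cdot>\<^sub>m A) $$ (i,j) * exp (s * x))"
    using Cauchy_product[of a b] a b by (simp add: sums_iff summable_Cauchy_product)
  moreover have "(\<Sum>m\<le>k. a m * b (k - m)) = ((A + s \<cdot>\<^sub>m 1\<^sub>m n) ^\<^sub>m k) $$ (i,j) / fact k * x ^ k" for k
  proof -
    have "a m * b (k - m) = of_nat (k choose m) * s ^ (k - m) * (A ^\<^sub>m m) $$ (i,j) / fact k * x ^ k"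
      if "m \<le> k" for m
      using that by (simp add: a_def b_def binomial_fact power_mult_distrib field_simps
          flip: power_add)
    then show ?thesis
      by (simp add: pow_mat_add_scalar_entry[OF A i j] sum_divide_distrib sum_distrib_right)
  qed
  ultimately show ?thesis
    using mat_exp_smult_entry_sums[of "A + s \<cdot>\<^sub>m 1\<^sub>m n" n i j x] A i j sums_unique2 by auto
qed

lemma abs_mat_exp_entry_le:
  fixes A :: "real mat"
  assumes A: "A \<in> carrier_mat n n" and i: "i < n" and j: "j < n"
    and bound: "\<And>k. \<bar>(A ^\<^sub>m k) $$ (i,j)\<bar> \<le> C * \<rho> ^ k" and x: "0 \<le> x"
  shows "\<bar>mat_exp (x \<cdot>\<^sub>m A) $$ (i,j)\<bar> \<le> C * exp (\<rho> * x)"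
proof -
  let ?a = "\<lambda>k. (A ^\<^sub>m k) $$ (i,j) / fact k * x ^ k"
  have "\<bar>mat_exp (x \<cdot>\<^sub>m A) $$ (i,j)\<bar> = \<bar>\<Sum>k. ?a k\<bar>"
    using mat_exp_smult_entry_sums[OF A i j] by (simp add: sums_iff)
  also have "\<dots> \<le> (\<Sum>k. \<bar>?a k\<bar>)"
    by (rule summable_rabs[OF summable_mat_exp_series[OF A i j]])
  also have "\<dots> \<le> (\<Sum>k. C * ((\<rho> * x) ^ k / fact k))"
  proof (rule suminf_le)
    show "\<bar>?a k\<bar> \<le> C * ((\<rho> * x) ^ k / fact k)" for k
      using mult_right_mono[OF bound[of k], of "x ^ k / fact k"] x
      by (simp add: abs_mult power_mult_distrib mult_ac)
    show "summable (\<lambda>k. \<bar>?a k\<bar>)" by (rule summable_mat_exp_series[OF A i j])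
    show "summable (\<lambda>k. C * ((\<rho> * x) ^ k / fact k))"
      using exp_converges_real by (intro summable_mult) (simp add: sums_iff)
  qed
  also have "\<dots> = C * exp (\<rho> * x)"
    using sums_mult[OF exp_converges_real[of "\<rho> * x"], of C] by (simp add: sums_iff)
  finally show ?thesis .
qed

section \<open>Exponential decay for Hurwitz matrices\<close>

definition hurwitz_mat :: "real mat \<Rightarrow> bool" where
  "hurwitz_mat T \<longleftrightarrow> (\<forall>ev. eigenvalue (map_mat complex_of_real T) ev \<longrightarrow> Re ev < 0)"

lemma eigenvalue_affine_mat:
  fixes A :: "'a::field mat"
  assumes A: "A \<in> carrier_mat n n" and s: "s \<noteq> 0"
    and ev: "eigenvalue (s \<cdot>\<^sub>m A + t \<cdot>\<^sub>m 1\<^sub>m n) \<nu>"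
  shows "eigenvalue A ((\<nu> - t) / s)"
proof -
  from ev obtain w where w: "w \<in> carrier_vec n" "w \<noteq> 0\<^sub>v n"
    and eq: "(s \<cdot>\<^sub>m A + t \<cdot>\<^sub>m 1\<^sub>m n) *\<^sub>v w = \<nu> \<cdot>\<^sub>v w"
    unfolding eigenvalue_def eigenvector_def using A by auto
  have "A *\<^sub>v w = ((\<nu> - t) / s) \<cdot>\<^sub>v w"
  proof (rule eq_vecI)
    fix i assume "i < dim_vec (((\<nu> - t) / s) \<cdot>\<^sub>v w)"
    then have i: "i < n" using w by simp
    have "((s \<cdot>\<^sub>m A + t \<cdot>\<^sub>m 1\<^sub>m n) *\<^sub>v w) $ i = s * (A *\<^sub>v w) $ i + t * w $ i"
      using A w i
      by (simp add: scalar_prod_def atLeast0LessThan distrib_right sum.distrib sum_distrib_left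
          distrib_left sum.remove[of _ i] mult.assoc)
    then have "s * (A *\<^sub>v w) $ i + t * w $ i = \<nu> * w $ i"
      using eq i w by simp
    then show "(A *\<^sub>v w) $ i = (((\<nu> - t) / s) \<cdot>\<^sub>v w) $ i"
      using i w s by (simp add: field_simps)
  qed (use A w in simp)
  then show ?thesis
    unfolding eigenvalue_def eigenvector_def using A w by auto
qed

lemma cmod_1_add_divide_less_1:
  fixes l :: complex
  assumes l: "Re l < 0" and c: "cmod l ^ 2 / (- 2 * Re l) < c"
  shows "cmod (1 + l / complex_of_real c) < 1"
proof -
  have pos: "0 < - 2 * Re l" using l by simp
  then have "0 \<le> cmod l ^ 2 / (- 2 * Re l)" by (intro divide_nonneg_pos) auto
  with c have c0: "0 < c" by linarith
  have "cmod l ^ 2 < c * (- 2 * Re l)" using c pos_divide_less_eq[OF pos] by blast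
  then have neg: "(2 * Re l * c + (Re l ^ 2 + Im l ^ 2)) / c ^ 2 < 0"
    using c0 unfolding cmod_power2 by (intro divide_neg_pos) (auto simp: algebra_simps)
  have re: "Re (1 + l / complex_of_real c) = 1 + Re l / c"
    and im: "Im (1 + l / complex_of_real c) = Im l / c"
    by (simp_all add: Re_divide_of_real Im_divide_of_real)
  have "cmod (1 + l / complex_of_real c) ^ 2 = 1 + (2 * Re l * c + (Re l ^ 2 + Im l ^ 2)) / c ^ 2"
    unfolding cmod_power2 re im using c0 by (simp add: field_simps power2_eq_square)
  with neg have "cmod (1 + l / complex_of_real c) ^ 2 < 1 ^ 2" by simp
  then show ?thesis by (rule power_less_imp_less_base) simp
qed

text \<open>The eigenvalues of T/c + 1 are the 1 + lambda/c for the eigenvalues lambda of T; take c larger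
  than every |lambda|^2 / (-2 Re lambda).\<close>
lemma hurwitz_mat_shift_contractive:
  assumes T: "T \<in> carrier_mat n n" and hT: "hurwitz_mat T"
  obtains c where "c > 0"
    "\<And>\<nu>. eigenvalue (map_mat complex_of_real ((1 / c) \<cdot>\<^sub>m T + 1\<^sub>m n)) \<nu> \<Longrightarrow> cmod \<nu> < 1"
proof -
  define Tc where "Tc = map_mat complex_of_real T"
  have Tc: "Tc \<in> carrier_mat n n" unfolding Tc_def using T by simp
  have eig: "Re l < 0" if "eigenvalue Tc l" for l
    using hT that unfolding hurwitz_mat_def Tc_def by blast
  define S where "S = spectrum Tc"
  have finS: "finite S" unfolding S_def by (rule card_finite_spectrum[OF Tc])
  define c where "c = 1 + (\<Sum>l\<in>S. cmod l ^ 2 / (- 2 * Re l))"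
  have term_nonneg: "0 \<le> cmod l ^ 2 / (- 2 * Re l)" if "l \<in> S" for l
    using eig[of l] that unfolding S_def spectrum_def by (intro divide_nonneg_pos) auto
  have c_gt: "cmod l ^ 2 / (- 2 * Re l) < c" if "l \<in> S" for l
  proof -
    have "cmod l ^ 2 / (- 2 * Re l) \<le> (\<Sum>l\<in>S. cmod l ^ 2 / (- 2 * Re l))"
      using that finS term_nonneg by (intro member_le_sum) auto
    then show ?thesis unfolding c_def by simp
  qed
  have c1: "c \<ge> 1" unfolding c_def using term_nonneg by (simp add: sum_nonneg)
  have "cmod \<nu> < 1" if ev: "eigenvalue (map_mat complex_of_real ((1 / c) \<cdot>\<^sub>m T + 1\<^sub>m n)) \<nu>" for \<nu>
  proof -
    define l where "l = (\<nu> - 1) / complex_of_real (1/c)"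
    have "map_mat complex_of_real ((1 / c) \<cdot>\<^sub>m T + 1\<^sub>m n) = complex_of_real (1/c) \<cdot>\<^sub>m Tc + 1 \<cdot>\<^sub>m 1\<^sub>m n"
      unfolding Tc_def using T by (intro eq_matI) auto
    then have "eigenvalue Tc l"
      unfolding l_def using ev c1 eigenvalue_affine_mat[OF Tc, of "complex_of_real (1/c)" 1 \<nu>] by simp
    then have "cmod (1 + l / complex_of_real c) < 1"
      using eig c_gt unfolding S_def spectrum_def by (intro cmod_1_add_divide_less_1) auto
    moreover have "\<nu> = 1 + l / complex_of_real c"
      unfolding l_def using c1 by (simp add: field_simps)
    ultimately show ?thesis by simp
  qed
  with c1 show ?thesis by (intro that[of c]) auto
qed

lemma spectral_radius_smult_less_1:
  fixes A :: "complex mat"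
  assumes A: "A \<in> carrier_mat n n" and n: "0 < n" and \<rho>: "spectral_radius A < \<rho>"
  shows "spectral_radius (complex_of_real (1 / \<rho>) \<cdot>\<^sub>m A) < 1"
proof -
  have "0 \<le> spectral_radius A" using spectral_radius_mem_max(1)[OF A n] by auto
  with \<rho> have \<rho>0: "0 < \<rho>" by simp
  let ?B = "complex_of_real (1 / \<rho>) \<cdot>\<^sub>m A"
  have B: "?B \<in> carrier_mat n n" using A by simp
  obtain \<mu> where ev: "eigenvalue ?B \<mu>" and sr: "spectral_radius ?B = cmod \<mu>"
    using spectral_radius_mem_max(1)[OF B n] unfolding spectrum_def by auto
  have "?B = complex_of_real (1 / \<rho>) \<cdot>\<^sub>m A + 0 \<cdot>\<^sub>m 1\<^sub>m n" using A by (intro eq_matI) auto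
  then have "eigenvalue A (\<mu> / complex_of_real (1 / \<rho>))"
    using eigenvalue_affine_mat[OF A, of "complex_of_real (1 / \<rho>)" 0 \<mu>] ev \<rho>0 by simp
  then have "cmod (\<mu> / complex_of_real (1 / \<rho>)) \<le> spectral_radius A"
    using spectral_radius_mem_max(2)[OF A n] unfolding spectrum_def by blast
  then have "cmod \<mu> * \<rho> \<le> spectral_radius A"
    using \<rho>0 by (simp add: norm_divide norm_mult)
  with \<rho> have "cmod \<mu> * \<rho> < 1 * \<rho>" by linarith
  then have "cmod \<mu> < 1" using \<rho>0 by (rule mult_right_less_imp_less[OF _ less_imp_le])
  with sr show ?thesis by simp
qed

lemma pow_mat_entry_geometric_bound:
  fixes D :: "real mat"
  assumes D: "D \<in> carrier_mat n n"
    and eig: "\<And>\<nu>. eigenvalue (map_mat complex_of_real D) \<nu> \<Longrightarrow> cmod \<nu> < 1"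
  obtains C \<rho> where "0 < \<rho>" "\<rho> < 1" "\<And>k i j. i < n \<Longrightarrow> j < n \<Longrightarrow> \<bar>(D ^\<^sub>m k) $$ (i,j)\<bar> \<le> C * \<rho> ^ k"
proof (cases "n = 0")
  case True
  then show ?thesis by (intro that[where \<rho> = "1/2"]) auto
next
  case False
  define Dc where "Dc = map_mat complex_of_real D"
  have Dc: "Dc \<in> carrier_mat n n" unfolding Dc_def using D by simp
  obtain \<mu>0 where "eigenvalue Dc \<mu>0" and "spectral_radius Dc = cmod \<mu>0"
    using spectral_radius_mem_max(1)[OF Dc] False unfolding spectrum_def by auto
  then have sr: "0 \<le> spectral_radius Dc" "spectral_radius Dc < 1"
    using eig unfolding Dc_def by auto
  define \<rho> where "\<rho> = (1 + spectral_radius Dc) / 2"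
  have rho: "0 < \<rho>" "\<rho> < 1" "spectral_radius Dc < \<rho>"
    using sr unfolding \<rho>_def by auto
  define A where "A = complex_of_real (1/\<rho>) \<cdot>\<^sub>m Dc"
  have A: "A \<in> carrier_mat n n" unfolding A_def using Dc by simp
  have "spectral_radius A < 1"
    unfolding A_def using spectral_radius_smult_less_1[OF Dc _ rho(3)] False by simp
  from spectral_radius_jnf_norm_bound_less_1_upper_triangular[OF A this]
  obtain C where C: "\<And>k. norm_bound (A ^\<^sub>m k) C" by blast
  have "\<bar>(D ^\<^sub>m k) $$ (i,j)\<bar> \<le> C * \<rho> ^ k" if i: "i < n" and j: "j < n" for k i j
  proof -
    have "A = map_mat complex_of_real ((1/\<rho>) \<cdot>\<^sub>m D)"
      unfolding A_def Dc_def using D by (intro eq_matI) auto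
    then have "A ^\<^sub>m k = map_mat complex_of_real ((1/\<rho>) ^ k \<cdot>\<^sub>m D ^\<^sub>m k)"
      using of_real_hom.mat_hom_pow[of "(1/\<rho>) \<cdot>\<^sub>m D" n k, symmetric] D by (simp add: pow_smult_mat[OF D])
    then have "(1/\<rho>) ^ k * \<bar>(D ^\<^sub>m k) $$ (i,j)\<bar> \<le> C"
      using C[of k] A D i j rho unfolding norm_bound_def by (auto simp: norm_mult norm_power norm_divide)
    then show ?thesis using rho by (simp add: power_one_over field_simps)
  qed
  then show ?thesis using that rho by blast
qed

lemma mat_exp_entry_decay:
  assumes T: "T \<in> carrier_mat n n" and hT: "hurwitz_mat T"
  obtains C \<epsilon> where "0 < \<epsilon>"
    "\<And>x i j. 0 \<le> x \<Longrightarrow> i < n \<Longrightarrow> j < n \<Longrightarrow> \<bar>mat_exp (x \<cdot>\<^sub>m T) $$ (i,j)\<bar> \<le> C * exp (- \<epsilon> * x)"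
proof -
  obtain c where c: "c > 0"
    and eig: "\<And>\<nu>. eigenvalue (map_mat complex_of_real ((1 / c) \<cdot>\<^sub>m T + 1\<^sub>m n)) \<nu> \<Longrightarrow> cmod \<nu> < 1"
    by (rule hurwitz_mat_shift_contractive[OF T hT]) auto
  define D where "D = (1 / c) \<cdot>\<^sub>m T + 1\<^sub>m n"
  have D: "D \<in> carrier_mat n n" unfolding D_def using T by simp
  obtain C \<rho> where rho: "0 < \<rho>" "\<rho> < 1"
    and bound: "\<And>k i j. i < n \<Longrightarrow> j < n \<Longrightarrow> \<bar>(D ^\<^sub>m k) $$ (i,j)\<bar> \<le> C * \<rho> ^ k"
    by (rule pow_mat_entry_geometric_bound[OF D eig[folded D_def]]) auto
  have TD: "T = c \<cdot>\<^sub>m D + (- c) \<cdot>\<^sub>m 1\<^sub>m n"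
    unfolding D_def using T c by (intro eq_matI) (auto simp: field_simps)
  have cD: "c \<cdot>\<^sub>m D \<in> carrier_mat n n" using D by simp
  show ?thesis
  proof (rule that)
    show "0 < c * (1 - \<rho>)" using c rho by simp
    fix x :: real and i j assume x: "0 \<le> x" and i: "i < n" and j: "j < n"
    have "\<bar>((c \<cdot>\<^sub>m D) ^\<^sub>m k) $$ (i,j)\<bar> \<le> C * (c * \<rho>) ^ k" for k
      using mult_left_mono[OF bound[OF i j, of k], of "c ^ k"] D i j c
      by (simp add: pow_smult_mat[OF D] abs_mult power_mult_distrib mult_ac)
    then have "\<bar>mat_exp (x \<cdot>\<^sub>m (c \<cdot>\<^sub>m D)) $$ (i,j)\<bar> \<le> C * exp (c * \<rho> * x)"
      by (rule abs_mat_exp_entry_le[OF cD i j _ x])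
    then have "\<bar>mat_exp (x \<cdot>\<^sub>m (c \<cdot>\<^sub>m D)) $$ (i,j)\<bar> * exp (- c * x) \<le> C * (exp (c * \<rho> * x) * exp (- c * x))"
      by (simp add: mult_right_mono flip: mult.assoc)
    also have "exp (c * \<rho> * x) * exp (- c * x) = exp (- (c * (1 - \<rho>)) * x)"
      by (simp add: algebra_simps flip: exp_add)
    finally show "\<bar>mat_exp (x \<cdot>\<^sub>m T) $$ (i,j)\<bar> \<le> C * exp (- (c * (1 - \<rho>)) * x)"
      unfolding TD mat_exp_add_scalar_entry[OF cD i j] by (simp add: abs_mult)
  qed
qed

section \<open>Matrix-exponential functions\<close>

lemma me_fun_eq_sum:
  assumes T: "T \<in> carrier_mat n n" and a: "a \<in> carrier_vec n" and v: "v \<in> carrier_vec n"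
  shows "me_fun a T v x = (\<Sum>i<n. \<Sum>j<n. a $ i * mat_exp (x \<cdot>\<^sub>m T) $$ (i,j) * v $ j)"
proof -
  have "mat_exp (x \<cdot>\<^sub>m T) \<in> carrier_mat n n"
    using T unfolding mat_exp_def by simp
  then have "me_fun a T v x = (\<Sum>j<n. (\<Sum>i<n. a $ i * mat_exp (x \<cdot>\<^sub>m T) $$ (i,j)) * v $ j)"
    using a v unfolding me_fun_def me_row_def row_mult_def
    by (simp add: scalar_prod_def atLeast0LessThan)
  also have "\<dots> = (\<Sum>j<n. \<Sum>i<n. a $ i * mat_exp (x \<cdot>\<^sub>m T) $$ (i,j) * v $ j)"
    by (simp add: sum_distrib_right)
  also have "\<dots> = (\<Sum>i<n. \<Sum>j<n. a $ i * mat_exp (x \<cdot>\<^sub>m T) $$ (i,j) * v $ j)"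
    by (rule sum.swap)
  finally show ?thesis .
qed

lemma scalar_prod_mult_mat_vec_eq_sum:
  fixes A :: "'a::comm_semiring_0 mat"
  assumes A: "A \<in> carrier_mat n n" and a: "a \<in> carrier_vec n" and v: "v \<in> carrier_vec n"
  shows "a \<bullet> (A *\<^sub>v v) = (\<Sum>i<n. \<Sum>j<n. a $ i * A $$ (i,j) * v $ j)"
  using A a v by (simp add: scalar_prod_def atLeast0LessThan sum_distrib_left mult.assoc)

lemma me_fun_sums:
  assumes T: "T \<in> carrier_mat n n" and a: "a \<in> carrier_vec n" and v: "v \<in> carrier_vec n"
  shows "(\<lambda>k. (a \<bullet> ((T ^\<^sub>m k) *\<^sub>v v)) / fact k * x ^ k) sums me_fun a T v x"
proof -
  have "(\<lambda>k. \<Sum>i<n. \<Sum>j<n. a $ i * ((T ^\<^sub>m k) $$ (i,j) / fact k * x ^ k) * v $ j)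
      sums (\<Sum>i<n. \<Sum>j<n. a $ i * mat_exp (x \<cdot>\<^sub>m T) $$ (i,j) * v $ j)"
  proof (intro sums_sum)
    fix i j assume "i \<in> {..<n}" "j \<in> {..<n}"
    then show "(\<lambda>k. a $ i * ((T ^\<^sub>m k) $$ (i,j) / fact k * x ^ k) * v $ j)
        sums (a $ i * mat_exp (x \<cdot>\<^sub>m T) $$ (i,j) * v $ j)"
      by (intro sums_mult2 sums_mult mat_exp_smult_entry_sums[OF T]) auto
  qed
  moreover have "(a \<bullet> ((T ^\<^sub>m k) *\<^sub>v v)) / fact k * x ^ k
      = (\<Sum>i<n. \<Sum>j<n. a $ i * ((T ^\<^sub>m k) $$ (i,j) / fact k * x ^ k) * v $ j)" for k
    unfolding scalar_prod_mult_mat_vec_eq_sum[OF pow_carrier_mat[OF T] a v] sum_divide_distrib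
      sum_distrib_right
    by (intro sum.cong refl) simp
  ultimately show ?thesis
    using me_fun_eq_sum[OF T a v] by simp
qed

lemma me_fun_has_real_derivative:
  assumes T: "T \<in> carrier_mat n n" and a: "a \<in> carrier_vec n" and v: "v \<in> carrier_vec n"
  shows "(me_fun a T v has_real_derivative me_fun a T (T *\<^sub>v v) x) (at x)"
proof -
  define c where "c w k = (a \<bullet> ((T ^\<^sub>m k) *\<^sub>v w)) / fact k" for w k
  have me: "me_fun a T w = (\<lambda>x. \<Sum>k. c w k * x ^ k)" if "w \<in> carrier_vec n" for w
    using me_fun_sums[OF T a that] unfolding c_def by (auto simp: sums_iff)
  have "diffs (c v) = c (T *\<^sub>v v)"
  proof
    fix k
    have "(T ^\<^sub>m Suc k) *\<^sub>v v = (T ^\<^sub>m k) *\<^sub>v (T *\<^sub>v v)"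
      using T v by (simp add: assoc_mult_mat_vec[of _ n n _ n])
    then show "diffs (c v) k = c (T *\<^sub>v v) k"
      unfolding diffs_def c_def fact_Suc of_nat_mult by simp
  qed
  moreover have "summable (\<lambda>k. c v k * y ^ k)" for y
    using me_fun_sums[OF T a v] unfolding c_def by (auto simp: sums_iff)
  ultimately show ?thesis
    using termdiffs_strong_converges_everywhere[of "c v" x] me[OF v] me[of "T *\<^sub>v v"] T v
    by simp
qed

lemma me_fun_exp_decay:
  assumes T: "T \<in> carrier_mat n n" and a: "a \<in> carrier_vec n" and v: "v \<in> carrier_vec n"
    and hT: "hurwitz_mat T"
  obtains C \<epsilon> where "0 < \<epsilon>" "\<And>x. 0 \<le> x \<Longrightarrow> \<bar>me_fun a T v x\<bar> \<le> C * exp (- \<epsilon> * x)"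
proof -
  obtain C \<epsilon> where \<epsilon>: "0 < \<epsilon>"
    and C: "\<And>x i j. 0 \<le> x \<Longrightarrow> i < n \<Longrightarrow> j < n \<Longrightarrow> \<bar>mat_exp (x \<cdot>\<^sub>m T) $$ (i,j)\<bar> \<le> C * exp (- \<epsilon> * x)"
    by (rule mat_exp_entry_decay[OF T hT]) auto
  define K where "K = (\<Sum>i<n. \<Sum>j<n. \<bar>a $ i\<bar> * \<bar>v $ j\<bar>)"
  have bound: "\<bar>me_fun a T v x\<bar> \<le> K * C * exp (- \<epsilon> * x)" if x: "0 \<le> x" for x
  proof -
    have "\<bar>me_fun a T v x\<bar> \<le> (\<Sum>i<n. \<Sum>j<n. \<bar>a $ i\<bar> * \<bar>mat_exp (x \<cdot>\<^sub>m T) $$ (i,j)\<bar> * \<bar>v $ j\<bar>)"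
      unfolding me_fun_eq_sum[OF T a v]
      by (rule order_trans[OF sum_abs sum_mono[OF order_trans[OF sum_abs]]]) (simp add: abs_mult)
    also have "\<dots> \<le> (\<Sum>i<n. \<Sum>j<n. \<bar>a $ i\<bar> * (C * exp (- \<epsilon> * x)) * \<bar>v $ j\<bar>)"
      using C x by (intro sum_mono mult_right_mono mult_left_mono) auto
    also have "\<dots> = K * C * exp (- \<epsilon> * x)"
      unfolding K_def by (simp add: sum_distrib_left sum_distrib_right mult_ac)
    finally show ?thesis .
  qed
  show ?thesis by (rule that[OF \<epsilon> bound])
qed

lemma hurwitz_mat_det_nonzero:
  assumes T: "T \<in> carrier_mat n n" and hT: "hurwitz_mat T"
  shows "det T \<noteq> 0"
proof
  assume "det T = 0"
  define Tc where "Tc = map_mat complex_of_real T"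
  have Tc: "Tc \<in> carrier_mat n n" unfolding Tc_def using T by simp
  have "det Tc = 0" unfolding Tc_def of_real_hom.hom_det \<open>det T = 0\<close> by simp
  then obtain v where v: "v \<in> carrier_vec n" "v \<noteq> 0\<^sub>v n" "Tc *\<^sub>v v = 0\<^sub>v n"
    using det_0_iff_vec_prod_zero[OF Tc] by blast
  then have "Tc *\<^sub>v v = 0 \<cdot>\<^sub>v v" by (intro eq_vecI) auto
  then have "eigenvalue Tc 0"
    unfolding eigenvalue_def eigenvector_def using v Tc by auto
  then show False using hT unfolding hurwitz_mat_def Tc_def by fastforce
qed

lemma minv_eqI:
  assumes A: "A \<in> carrier_mat n n" and B: "B \<in> carrier_mat n n"
    and AB: "A * B = 1\<^sub>m n" and BA: "B * A = 1\<^sub>m n"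
  shows "minv A = B"
  unfolding minv_def
proof (rule the_equality)
  fix C assume C: "C \<in> carrier_mat (dim_row A) (dim_row A) \<and> A * C = 1\<^sub>m (dim_row A) \<and> C * A = 1\<^sub>m (dim_row A)"
  then have C: "C \<in> carrier_mat n n" and CA: "C * A = 1\<^sub>m n" using A by auto
  have "C = C * (A * B)" using C AB by simp
  also have "\<dots> = (C * A) * B" using A B C by (simp add: assoc_mult_mat[of _ n n _ n _ n])
  finally show "C = B" using B CA by simp
qed (use A B AB BA in simp)

lemma hurwitz_mat_minv_neg:
  assumes T: "T \<in> carrier_mat n n" and hT: "hurwitz_mat T"
  shows "minv (- T) \<in> carrier_mat n n" and "T * minv (- T) = - 1\<^sub>m n"
proof -
  obtain B where B: "B \<in> carrier_mat n n" "B * T = 1\<^sub>m n" "T * B = 1\<^sub>m n"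
    using det_non_zero_imp_unit[OF T hurwitz_mat_det_nonzero[OF T hT]]
    unfolding Units_def ring_mat_def by auto
  have "minv (- T) = - B"
    using T B by (intro minv_eqI[of _ n]) auto
  then show "minv (- T) \<in> carrier_mat n n" and "T * minv (- T) = - 1\<^sub>m n"
    using T B by auto
qed

lemma dim_me_row:
  assumes "T \<in> carrier_mat n n"
  shows "dim_vec (me_row a T x) = n"
  using assms unfolding me_row_def row_mult_def mat_exp_def by simp

lemma me_fun_minv_has_real_derivative:
  assumes T: "T \<in> carrier_mat n n" and a: "a \<in> carrier_vec n" and v: "v \<in> carrier_vec n"
    and hT: "hurwitz_mat T"
  shows "((\<lambda>x. - me_fun a T (minv (- T) *\<^sub>v v) x) has_real_derivative me_fun a T v x) (at x)"
proof -
  note N = hurwitz_mat_minv_neg[OF T hT]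
  have "T *\<^sub>v (minv (- T) *\<^sub>v v) = - v"
    using T v N by (simp flip: assoc_mult_mat_vec[of _ n n _ n])
  then have "me_fun a T (T *\<^sub>v (minv (- T) *\<^sub>v v)) x = - me_fun a T v x"
    using dim_me_row[OF T] v unfolding me_fun_def by simp
  then show ?thesis
    using DERIV_minus[OF me_fun_has_real_derivative[OF T a mult_mat_vec_carrier[OF N(1) v], of x]]
    by simp
qed

section \<open>Truncated moments\<close>

lemma lborel_integral_greaterThan_FTC:
  fixes f F :: "real \<Rightarrow> real"
  assumes deriv: "\<And>x. (F has_real_derivative f x) (at x)" and cont: "\<And>x. isCont f x"
    and int: "integrable lborel (\<lambda>x. indicator {z<..} x * f x)"
    and lim: "(F \<longlongrightarrow> 0) at_top"
  shows "(\<integral>x. indicator {z<..} x * f x \<partial>lborel) = - F z"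
proof -
  have "(LBINT x=ereal z..\<infinity>. f x) = 0 - F z"
  proof (rule interval_integral_FTC_integrable)
    show "(F has_vector_derivative f x) (at x)" for x
      using deriv[of x] by (simp add: has_real_derivative_iff_has_vector_derivative)
    show "set_integrable lborel (einterval (ereal z) \<infinity>) f"
      using int by (simp add: set_integrable_def einterval_iff greaterThan_def)
    have "(F \<longlongrightarrow> F z) (at_right z)"
      using DERIV_isCont[OF deriv] by (simp add: isCont_def filterlim_at_split)
    then show "((F \<circ> real_of_ereal) \<longlongrightarrow> F z) (at_right (ereal z))"
      by (simp add: ereal_tendsto_simps)
    show "((F \<circ> real_of_ereal) \<longlongrightarrow> 0) (at_left \<infinity>)"
      using lim by (simp add: ereal_tendsto_simps)
  qed (use cont in auto)
  then show ?thesis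
    unfolding interval_integral_to_infinity_eq set_lebesgue_integral_def by simp
qed

lemma integrable_greaterThan_exp_bound:
  fixes f :: "real \<Rightarrow> real"
  assumes cont: "\<And>x. isCont f x" and z: "0 \<le> z" and \<delta>: "0 < \<delta>"
    and bound: "\<And>x. z < x \<Longrightarrow> \<bar>f x\<bar> \<le> K * exp (- \<delta> * x)"
  shows "integrable lborel (\<lambda>x. indicator {z<..} x * f x)"
proof (rule Bochner_Integration.integrable_bound)
  show "integrable lborel (\<lambda>x. \<bar>K\<bar> * (indicator {0<..} x * exp (- (x * \<delta>))))"
    using integrable_I0i_exp_mscale[OF \<delta>] unfolding set_integrable_def by simp
  have "continuous_on UNIV f" using cont by (simp add: continuous_on_eq_continuous_at)
  from borel_measurable_continuous_onI[OF this]
  show "(\<lambda>x. indicator {z<..} x * f x) \<in> borel_measurable lborel" by measurable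
  have "norm (indicator {z<..} x * f x) \<le> norm (\<bar>K\<bar> * (indicator {0<..} x * exp (- (x * \<delta>))))" for x
  proof (cases "z < x")
    case True
    have "K * exp (- \<delta> * x) \<le> \<bar>K\<bar> * exp (- (x * \<delta>))"
      by (simp add: mult.commute mult_right_mono)
    then show ?thesis using True z bound[OF True] by simp
  qed simp
  then show "AE x in lborel. norm (indicator {z<..} x * f x)
      \<le> norm (\<bar>K\<bar> * (indicator {0<..} x * exp (- (x * \<delta>))))"
    by simp
qed

lemma power_div_fact_le_exp:
  fixes x :: real
  assumes "0 \<le> x"
  shows "x ^ r / fact r \<le> exp x"
  using sum_le_suminf[of "\<lambda>n. x ^ n / fact n" "{r}"] exp_converges_real[of x] assms
  by (simp add: sums_iff)

lemma abs_power_mult_le_exp: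
  fixes g x z :: real
  assumes \<epsilon>: "0 < \<epsilon>" and z: "0 \<le> z" and x: "z \<le> x" and g: "\<bar>g\<bar> \<le> C * exp (- \<epsilon> * x)"
  shows "\<bar>(x - z) ^ r * g\<bar> \<le> C * fact r * (2 / \<epsilon>) ^ r * exp (- (\<epsilon> / 2) * x)"
proof -
  have C: "0 \<le> C" using g by (metis abs_ge_zero exp_gt_zero order_trans zero_le_mult_iff not_le)
  have "(\<epsilon> / 2 * x) ^ r / fact r \<le> exp (\<epsilon> / 2 * x)"
    using \<epsilon> x z by (intro power_div_fact_le_exp) simp
  then have xr: "x ^ r \<le> fact r * (2 / \<epsilon>) ^ r * exp (\<epsilon> / 2 * x)"
    using \<epsilon> by (simp add: field_simps power_mult_distrib power_divide)
  have "\<bar>(x - z) ^ r * g\<bar> \<le> x ^ r * (C * exp (- \<epsilon> * x))"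
    using x z g by (simp add: abs_mult) (intro mult_mono power_mono; simp)
  also have "\<dots> \<le> (fact r * (2 / \<epsilon>) ^ r * exp (\<epsilon> / 2 * x)) * (C * exp (- \<epsilon> * x))"
    using C by (intro mult_right_mono xr) simp
  also have "\<dots> = C * fact r * (2 / \<epsilon>) ^ r * (exp (\<epsilon> / 2 * x) * exp (- \<epsilon> * x))"
    by (simp add: mult_ac)
  also have "exp (\<epsilon> / 2 * x) * exp (- \<epsilon> * x) = exp (- (\<epsilon> / 2) * x)"
    by (simp flip: exp_add)
  finally show ?thesis .
qed

lemma me_fun_moment_exp_decay:
  assumes T: "T \<in> carrier_mat n n" and a: "a \<in> carrier_vec n" and v: "v \<in> carrier_vec n"
    and hT: "hurwitz_mat T" and z: "0 \<le> z"
  obtains K \<delta> where "0 < \<delta>" "\<And>x. z \<le> x \<Longrightarrow> \<bar>(x - z) ^ r * me_fun a T v x\<bar> \<le> K * exp (- \<delta> * x)"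
proof -
  obtain C \<epsilon> where \<epsilon>: "0 < \<epsilon>" and C: "\<And>x. 0 \<le> x \<Longrightarrow> \<bar>me_fun a T v x\<bar> \<le> C * exp (- \<epsilon> * x)"
    by (rule me_fun_exp_decay[OF T a v hT]) auto
  have "0 < \<epsilon> / 2" using \<epsilon> by simp
  moreover have "\<bar>(x - z) ^ r * me_fun a T v x\<bar> \<le> C * fact r * (2 / \<epsilon>) ^ r * exp (- (\<epsilon> / 2) * x)"
    if "z \<le> x" for x
    using z that by (intro abs_power_mult_le_exp[OF \<epsilon> z that] C) simp
  ultimately show ?thesis by (rule that)
qed

lemma isCont_me_fun:
  assumes T: "T \<in> carrier_mat n n" and a: "a \<in> carrier_vec n" and v: "v \<in> carrier_vec n"
  shows "isCont (me_fun a T v) x"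
  by (rule DERIV_isCont[OF me_fun_has_real_derivative[OF T a v]])

lemma integrable_me_fun_moment:
  assumes T: "T \<in> carrier_mat n n" and a: "a \<in> carrier_vec n" and v: "v \<in> carrier_vec n"
    and hT: "hurwitz_mat T" and z: "0 \<le> z"
  shows "integrable lborel (\<lambda>x. indicator {z<..} x * ((x - z) ^ r * me_fun a T v x))"
proof -
  obtain K \<delta> where \<delta>: "0 < \<delta>"
    and K: "\<And>x. z \<le> x \<Longrightarrow> \<bar>(x - z) ^ r * me_fun a T v x\<bar> \<le> K * exp (- \<delta> * x)"
    by (rule me_fun_moment_exp_decay[OF T a v hT z]) auto
  have "isCont (\<lambda>x. (x - z) ^ r * me_fun a T v x) x" for x
    using isCont_me_fun[OF T a v] by (intro continuous_intros)
  then show ?thesis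
    using K by (intro integrable_greaterThan_exp_bound[OF _ z \<delta>, where K = K]) simp_all
qed

lemma tendsto_me_fun_moment:
  assumes T: "T \<in> carrier_mat n n" and a: "a \<in> carrier_vec n" and v: "v \<in> carrier_vec n"
    and hT: "hurwitz_mat T" and z: "0 \<le> z"
  shows "((\<lambda>x. (x - z) ^ r * me_fun a T v x) \<longlongrightarrow> 0) at_top"
proof -
  obtain K \<delta> where \<delta>: "0 < \<delta>"
    and K: "\<And>x. z \<le> x \<Longrightarrow> \<bar>(x - z) ^ r * me_fun a T v x\<bar> \<le> K * exp (- \<delta> * x)"
    by (rule me_fun_moment_exp_decay[OF T a v hT z]) auto
  have "((\<lambda>x. exp (- \<delta> * x)) \<longlongrightarrow> 0) at_top"
    using \<delta> by (auto intro!: exp_at_bot[THEN filterlim_compose] filterlim_tendsto_pos_mult_at_top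
        filterlim_ident simp: filterlim_uminus_at_bot)
  then have "((\<lambda>x. K * exp (- \<delta> * x)) \<longlongrightarrow> 0) at_top"
    by (rule tendsto_mult_right_zero)
  moreover have "eventually (\<lambda>x. norm ((x - z) ^ r * me_fun a T v x) \<le> K * exp (- \<delta> * x)) at_top"
    using K unfolding eventually_at_top_linorder by auto
  ultimately show ?thesis
    by (rule Lim_null_comparison[rotated])
qed

text \<open>Integration by parts against the antiderivative -alpha e^(Tx) (-T)^-1 v of alpha e^(Tx) v; the
  boundary terms vanish at z because of the factor (x - z)^(r+1), and at infinity by exponential decay.\<close>
lemma integral_me_fun_moment_Suc:
  assumes T: "T \<in> carrier_mat n n" and a: "a \<in> carrier_vec n" and v: "v \<in> carrier_vec n"
    and hT: "hurwitz_mat T" and z: "0 \<le> z"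
  shows "(\<integral>x. indicator {z<..} x * ((x - z) ^ Suc r * me_fun a T v x) \<partial>lborel)
       = real (Suc r) * (\<integral>x. indicator {z<..} x * ((x - z) ^ r * me_fun a T (minv (- T) *\<^sub>v v) x) \<partial>lborel)"
proof -
  define w where "w = minv (- T) *\<^sub>v v"
  have w: "w \<in> carrier_vec n"
    unfolding w_def using hurwitz_mat_minv_neg(1)[OF T hT] v by simp
  let ?f = "\<lambda>x. (x - z) ^ Suc r * me_fun a T v x - real (Suc r) * ((x - z) ^ r * me_fun a T w x)"
  let ?F = "\<lambda>x. - ((x - z) ^ Suc r * me_fun a T w x)"
  have i1: "integrable lborel (\<lambda>x. indicator {z<..} x * ((x - z) ^ Suc r * me_fun a T v x))"
    by (rule integrable_me_fun_moment[OF T a v hT z])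
  have i2: "integrable lborel (\<lambda>x. real (Suc r) * (indicator {z<..} x * ((x - z) ^ r * me_fun a T w x)))"
    using integrable_me_fun_moment[OF T a w hT z, of r] by simp
  have "(\<integral>x. indicator {z<..} x * ?f x \<partial>lborel) = - ?F z"
  proof (rule lborel_integral_greaterThan_FTC[where F = ?F])
    show "(?F has_real_derivative ?f x) (at x)" for x
    proof -
      have "((\<lambda>x. x - z) has_real_derivative 1) (at x)"
        using DERIV_diff[OF DERIV_ident DERIV_const] by simp
      from DERIV_power[OF this, of "Suc r"]
      have "((\<lambda>x. (x - z) ^ Suc r) has_real_derivative real (Suc r) * (x - z) ^ r) (at x)"
        by simp
      from DERIV_mult[OF this me_fun_minv_has_real_derivative[OF T a v hT, folded w_def]]
      show ?thesis by (simp add: algebra_simps)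
    qed
    show "isCont ?f x" for x
      using isCont_me_fun[OF T a v] isCont_me_fun[OF T a w] by (intro continuous_intros)
    show "integrable lborel (\<lambda>x. indicator {z<..} x * ?f x)"
      using Bochner_Integration.integrable_diff[OF i1 i2] by (simp add: algebra_simps)
    show "(?F \<longlongrightarrow> 0) at_top"
      using tendsto_minus[OF tendsto_me_fun_moment[OF T a w hT z, of "Suc r"]] by simp
  qed
  then have "(\<integral>x. indicator {z<..} x * ((x - z) ^ Suc r * me_fun a T v x)
      - real (Suc r) * (indicator {z<..} x * ((x - z) ^ r * me_fun a T w x)) \<partial>lborel) = 0"
    by (simp add: algebra_simps)
  then show ?thesis
    using Bochner_Integration.integral_diff[OF i1 i2] by (simp add: w_def)
qed

lemma integral_me_fun_moment:
  assumes T: "T \<in> carrier_mat n n" and a: "a \<in> carrier_vec n" and v: "v \<in> carrier_vec n"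
    and hT: "hurwitz_mat T" and z: "0 \<le> z"
  shows "(\<integral>x. indicator {z<..} x * ((x - z) ^ r * me_fun a T v x) \<partial>lborel)
       = fact r * me_fun a T ((minv (- T) ^\<^sub>m (r + 1)) *\<^sub>v v) z"
  using v
proof (induction r arbitrary: v)
  case 0
  note N = hurwitz_mat_minv_neg[OF T hT]
  have "(\<integral>x. indicator {z<..} x * me_fun a T v x \<partial>lborel) = - (- me_fun a T (minv (- T) *\<^sub>v v) z)"
    using me_fun_minv_has_real_derivative[OF T a "0.prems" hT]
      integrable_me_fun_moment[OF T a "0.prems" hT z, of 0]
      tendsto_minus[OF tendsto_me_fun_moment[OF T a mult_mat_vec_carrier[OF N(1) "0.prems"] hT z, of 0]]
      isCont_me_fun[OF T a "0.prems"]
    by (intro lborel_integral_greaterThan_FTC[where F = "\<lambda>x. - me_fun a T (minv (- T) *\<^sub>v v) x"]) auto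
  then show ?case using N by simp
next
  case (Suc r)
  define N where "N = minv (- T)"
  have N: "N \<in> carrier_mat n n" unfolding N_def by (rule hurwitz_mat_minv_neg(1)[OF T hT])
  have "(N ^\<^sub>m (r + 1)) *\<^sub>v (N *\<^sub>v v) = (N ^\<^sub>m (Suc r + 1)) *\<^sub>v v"
    using assoc_mult_mat_vec[OF pow_carrier_mat[OF N, of "Suc r"] N Suc.prems] by simp
  then show ?case
    using integral_me_fun_moment_Suc[OF T a Suc.prems hT z, of r] Suc.IH[of "N *\<^sub>v v"] N Suc.prems
    by (simp add: N_def)
qed

section \<open>Mixtures of products\<close>

lemma ME_tripleD:
  assumes "ME_triple n a T t"
  shows "T \<in> carrier_mat n n" "a \<in> carrier_vec n" "t \<in> carrier_vec n" "hurwitz_mat T"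
    "\<And>x. 0 \<le> x \<Longrightarrow> 0 \<le> me_fun a T t x"
  using assms unfolding ME_triple_def hurwitz_mat_def by auto

text \<open>Stated with the exponent 0 + 1, the form in which it appears in the r = 0 instance of the
  moment formulas.\<close>
lemma me_l_eq_pow:
  "me_l T t = (minv (- T) ^\<^sub>m (0 + 1)) *\<^sub>v t"
  unfolding me_l_def by simp

text \<open>A nonnegative density whose integral over (z, oo) vanishes is a.e. zero there.\<close>
lemma me_fun_moment_eq_0:
  assumes triple: "ME_triple n a T t" and z: "0 \<le> z"
    and S0: "me_fun a T (me_l T t) z = 0"
  shows "me_fun a T ((minv (- T) ^\<^sub>m (r + 1)) *\<^sub>v t) z = 0"
proof -
  note D = ME_tripleD[OF triple]
  let ?g = "\<lambda>y. indicator {z<..} y * me_fun a T t y"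
  have "integrable lborel ?g"
    using integrable_me_fun_moment[OF D(1-4) z, of 0] by simp
  moreover have "AE y in lborel. 0 \<le> ?g y"
    using z D(5) by (intro AE_I2) (auto simp: indicator_def)
  moreover have "(\<integral>y. ?g y \<partial>lborel) = 0"
    using integral_me_fun_moment[OF D(1-4) z, of 0] S0 by (simp add: me_l_eq_pow)
  ultimately have "AE y in lborel. ?g y = 0"
    using integral_nonneg_eq_0_iff_AE by blast
  then have "AE y in lborel. indicator {z<..} y * ((y - z) ^ r * me_fun a T t y) = 0"
    by eventually_elim auto
  then have "fact r * me_fun a T ((minv (- T) ^\<^sub>m (r + 1)) *\<^sub>v t) z = 0"
    using integral_me_fun_moment[OF D(1-4) z, of r] integral_eq_zero_AE by metis
  then show ?thesis by simp
qed

lemma idx_set_lessD: "i \<in> idx_set L M \<Longrightarrow> j < M \<Longrightarrow> i j < L"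
  unfolding idx_set_def by (auto simp: PiE_iff)

lemma mmeam_fun_mult_prod_eq_sum:
  assumes z: "\<And>j. j < M \<Longrightarrow> 0 \<le> z j"
  shows "mmeam_fun L M p a T t x * (\<Prod>j<M. indicator {z j<..} (x j) * w j)
       = (\<Sum>i\<in>idx_set L M. p i * (\<Prod>j<M. indicator {z j<..} (x j) *
            (w j * me_fun (a (i j)) (T (i j)) (t (i j)) (x j))))"
proof (cases "\<forall>j<M. 0 \<le> x j")
  case True
  then have "mmeam_fun L M p a T t x * (\<Prod>j<M. indicator {z j<..} (x j) * w j)
      = (\<Sum>i\<in>idx_set L M. p i * ((\<Prod>j<M. me_fun (a (i j)) (T (i j)) (t (i j)) (x j))
          * (\<Prod>j<M. indicator {z j<..} (x j) * w j)))"
    unfolding mmeam_fun_def by (simp add: sum_distrib_right mult.assoc)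
  also have "\<dots> = (\<Sum>i\<in>idx_set L M. p i * (\<Prod>j<M. indicator {z j<..} (x j) *
            (w j * me_fun (a (i j)) (T (i j)) (t (i j)) (x j))))"
  proof (intro sum.cong refl arg_cong[where f = "\<lambda>y. p _ * y"])
    fix i
    show "(\<Prod>j<M. me_fun (a (i j)) (T (i j)) (t (i j)) (x j)) * (\<Prod>j<M. indicator {z j<..} (x j) * w j)
        = (\<Prod>j<M. indicator {z j<..} (x j) * (w j * me_fun (a (i j)) (T (i j)) (t (i j)) (x j)))"
      unfolding prod.distrib[symmetric] by (intro prod.cong refl) (simp add: mult_ac)
  qed
  finally show ?thesis .
next
  case False
  then obtain j0 where j0: "j0 < M" "x j0 < 0" by auto
  then have "indicator {z j0<..} (x j0) = (0::real)"
    using z[of j0] by simp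
  then have zero: "(\<Prod>j<M. indicator {z j<..} (x j) * h j) = (0::real)" for h
    using j0 by (intro prod_zero) auto
  have "mmeam_fun L M p a T t x = 0"
    unfolding mmeam_fun_def using False by (rule if_not_P)
  then show ?thesis
    by (simp only: zero mult_zero_left mult_zero_right sum.neutral_const)
qed

lemma integral_mmeam_fun_moment:
  assumes triples: "\<And>k. k < L \<Longrightarrow> ME_triple (n k) (a k) (T k) (t k)"
    and z: "\<And>j. j < M \<Longrightarrow> 0 \<le> z j"
  shows "(\<integral>x. mmeam_fun L M p a T t x * (\<Prod>j<M. indicator {z j<..} (x j) * (x j - z j) ^ r j)
            \<partial>PiM {..<M} (\<lambda>_. lborel))
       = (\<Sum>i\<in>idx_set L M. p i * (\<Prod>j<M. fact (r j) *
            me_fun (a (i j)) (T (i j)) ((minv (- T (i j)) ^\<^sub>m (r j + 1)) *\<^sub>v t (i j)) (z j)))"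
proof -
  interpret product_sigma_finite "\<lambda>_::nat. lborel"
    by (simp add: product_sigma_finite_def sigma_finite_lborel)
  define F where "F i j y = indicator {z j<..} y * ((y - z j) ^ r j * me_fun (a (i j)) (T (i j)) (t (i j)) y)"
    for i j and y :: real
  have D: "T (i j) \<in> carrier_mat (n (i j)) (n (i j))" "a (i j) \<in> carrier_vec (n (i j))"
    "t (i j) \<in> carrier_vec (n (i j))" "hurwitz_mat (T (i j))"
    if "i \<in> idx_set L M" "j < M" for i j
    using ME_tripleD[OF triples[OF idx_set_lessD[OF that]]] by auto
  have int: "integrable lborel (F i j)" if "i \<in> idx_set L M" "j < M" for i j
    unfolding F_def using integrable_me_fun_moment[OF D[OF that] z[OF that(2)]] .
  have "(\<integral>x. mmeam_fun L M p a T t x * (\<Prod>j<M. indicator {z j<..} (x j) * (x j - z j) ^ r j)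
            \<partial>PiM {..<M} (\<lambda>_. lborel))
      = (\<integral>x. (\<Sum>i\<in>idx_set L M. p i * (\<Prod>j<M. F i j (x j))) \<partial>PiM {..<M} (\<lambda>_. lborel))"
    unfolding F_def by (simp only: mmeam_fun_mult_prod_eq_sum[OF z])
  also have "\<dots> = (\<Sum>i\<in>idx_set L M. p i * (\<integral>x. (\<Prod>j<M. F i j (x j)) \<partial>PiM {..<M} (\<lambda>_. lborel)))"
    using int by (subst Bochner_Integration.integral_sum) (auto intro: product_integrable_prod)
  also have "\<dots> = (\<Sum>i\<in>idx_set L M. p i * (\<Prod>j<M. integral\<^sup>L lborel (F i j)))"
    using int by (intro sum.cong refl arg_cong[where f = "\<lambda>y. p _ * y"] product_integral_prod) auto
  also have "\<dots> = (\<Sum>i\<in>idx_set L M. p i * (\<Prod>j<M. fact (r j) *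
            me_fun (a (i j)) (T (i j)) ((minv (- T (i j)) ^\<^sub>m (r j + 1)) *\<^sub>v t (i j)) (z j)))"
  proof (intro sum.cong prod.cong refl arg_cong[where f = "\<lambda>y. p _ * y"])
    fix i j assume i: "i \<in> idx_set L M" and "j \<in> {..<M}"
    then have j: "j < M" by simp
    show "integral\<^sup>L lborel (F i j) = fact (r j) *
        me_fun (a (i j)) (T (i j)) ((minv (- T (i j)) ^\<^sub>m (r j + 1)) *\<^sub>v t (i j)) (z j)"
      unfolding F_def by (rule integral_me_fun_moment[OF D[OF i j] z[OF j]])
  qed
  finally show ?thesis .
qed

lemma mmeam_fun_nonneg:
  assumes "\<And>x. (\<forall>j<M. 0 \<le> x j) \<Longrightarrow> mmeam_fun L M p a T t x \<ge> 0"
  shows "0 \<le> mmeam_fun L M p a T t x"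
  using assms[of x] unfolding mmeam_fun_def by auto

lemma integral_indicator_moment_mmeam:
  fixes P :: "'w measure" and X :: "'w \<Rightarrow> nat \<Rightarrow> real"
  assumes triples: "\<And>k. k < L \<Longrightarrow> ME_triple (n k) (a k) (T k) (t k)"
    and f_nonneg: "\<And>x. (\<forall>j<M. 0 \<le> x j) \<Longrightarrow> mmeam_fun L M p a T t x \<ge> 0"
    and dist: "distributed P (PiM {..<M} (\<lambda>_. lborel)) X (\<lambda>x. ennreal (mmeam_fun L M p a T t x))"
    and z: "\<And>j. j < M \<Longrightarrow> 0 \<le> z j"
  shows "(\<integral>\<omega>. indicator {\<omega> \<in> space P. \<forall>j<M. X \<omega> j > z j} \<omega> * (\<Prod>j<M. (X \<omega> j - z j) ^ r j) \<partial>P)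
       = (\<Sum>i\<in>idx_set L M. p i * (\<Prod>j<M. fact (r j) *
            me_fun (a (i j)) (T (i j)) ((minv (- T (i j)) ^\<^sub>m (r j + 1)) *\<^sub>v t (i j)) (z j)))"
proof -
  define h where "h x = (\<Prod>j<M. indicator {z j<..} (x j) * (x j - z j) ^ r j)" for x :: "nat \<Rightarrow> real"
  have "indicator {\<omega> \<in> space P. \<forall>j<M. X \<omega> j > z j} \<omega> * (\<Prod>j<M. (X \<omega> j - z j) ^ r j) = h (X \<omega>)"
    if "\<omega> \<in> space P" for \<omega>
  proof (cases "\<forall>j<M. X \<omega> j > z j")
    case False
    then obtain j0 where "j0 < M" "\<not> X \<omega> j0 > z j0" by auto
    then have "h (X \<omega>) = 0"
      unfolding h_def by (intro prod_zero) (auto intro!: bexI[of _ j0])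
    with False show ?thesis by simp
  qed (use that in \<open>simp add: h_def\<close>)
  then have "(\<integral>\<omega>. indicator {\<omega> \<in> space P. \<forall>j<M. X \<omega> j > z j} \<omega> * (\<Prod>j<M. (X \<omega> j - z j) ^ r j) \<partial>P)
      = (\<integral>\<omega>. h (X \<omega>) \<partial>P)"
    by (rule Bochner_Integration.integral_cong[OF refl])
  also have "\<dots> = (\<integral>x. mmeam_fun L M p a T t x * h x \<partial>PiM {..<M} (\<lambda>_. lborel))"
    using mmeam_fun_nonneg[OF f_nonneg]
    by (intro distributed_integral[OF dist, symmetric]) (auto simp: h_def)
  also have "\<dots> = (\<Sum>i\<in>idx_set L M. p i * (\<Prod>j<M. fact (r j) *
            me_fun (a (i j)) (T (i j)) ((minv (- T (i j)) ^\<^sub>m (r j + 1)) *\<^sub>v t (i j)) (z j)))"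
    unfolding h_def by (rule integral_mmeam_fun_moment[OF triples z])
  finally show ?thesis .
qed

lemma sum_prod_divide_cancel:
  fixes S W :: "'i \<Rightarrow> nat \<Rightarrow> real"
  assumes "\<And>i j. i \<in> I \<Longrightarrow> j < M \<Longrightarrow> S i j = 0 \<Longrightarrow> W i j = 0"
  shows "(\<Sum>i\<in>I. p i * (\<Prod>j<M. S i j) / D * (\<Prod>j<M. W i j / S i j))
       = (\<Sum>i\<in>I. p i * (\<Prod>j<M. W i j)) / D"
  unfolding sum_divide_distrib
proof (intro sum.cong refl)
  fix i assume "i \<in> I"
  then have "(\<Prod>j<M. S i j) * (\<Prod>j<M. W i j / S i j) = (\<Prod>j<M. W i j)"
    using assms by (simp flip: prod.distrib) (intro prod.cong; auto)
  then show "p i * (\<Prod>j<M. S i j) / D * (\<Prod>j<M. W i j / S i j) = p i * (\<Prod>j<M. W i j) / D"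
    by (metis mult.assoc times_divide_eq_left)
qed

lemma scalar_prod_alpha_RL:
  assumes "T \<in> carrier_mat n n" and "w \<in> carrier_vec n"
  shows "alpha_RL a T t z \<bullet> w = me_fun a T w z / me_fun a T (me_l T t) z"
  using assms carrier_vecI[OF dim_me_row[OF assms(1)]]
  unfolding alpha_RL_def me_fun_def by (subst smult_scalar_prod_distrib) auto

lemma sum_p_RL_alpha_RL_eq:
  assumes triples: "\<And>k. k < L \<Longrightarrow> ME_triple (n k) (a k) (T k) (t k)"
    and z: "\<And>j. j < M \<Longrightarrow> 0 \<le> z j"
  shows "(\<Sum>i\<in>idx_set L M. p_RL L M p a T t z i *
            (\<Prod>j<M. fact (r j) * (alpha_RL (a (i j)) (T (i j)) (t (i j)) (z j)
               \<bullet> ((minv (- T (i j)) ^\<^sub>m (r j + 1)) *\<^sub>v t (i j)))))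
       = (\<Sum>i\<in>idx_set L M. p i * (\<Prod>j<M. fact (r j) *
            me_fun (a (i j)) (T (i j)) ((minv (- T (i j)) ^\<^sub>m (r j + 1)) *\<^sub>v t (i j)) (z j)))
         / (\<Sum>i\<in>idx_set L M. p i * (\<Prod>j<M. me_fun (a (i j)) (T (i j)) (me_l (T (i j)) (t (i j))) (z j)))"
    (is "?lhs = (\<Sum>i\<in>_. p i * (\<Prod>j<M. ?W i j)) / ?D")
proof -
  define S where "S i j = me_fun (a (i j)) (T (i j)) (me_l (T (i j)) (t (i j))) (z j)" for i j
  have factor: "fact (r j) * (alpha_RL (a (i j)) (T (i j)) (t (i j)) (z j)
      \<bullet> ((minv (- T (i j)) ^\<^sub>m (r j + 1)) *\<^sub>v t (i j))) = ?W i j / S i j"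
    if "i \<in> idx_set L M" "j \<in> {..<M}" for i j
  proof -
    from that have "i j < L" by (simp add: idx_set_lessD)
    note D = ME_tripleD[OF triples[OF this]]
    have "(minv (- T (i j)) ^\<^sub>m (r j + 1)) *\<^sub>v t (i j) \<in> carrier_vec (n (i j))"
      by (rule mult_mat_vec_carrier[OF pow_carrier_mat[OF hurwitz_mat_minv_neg(1)[OF D(1,4)]] D(3)])
    then show ?thesis
      unfolding S_def by (simp add: scalar_prod_alpha_RL[OF D(1)])
  qed
  have p_RL: "p_RL L M p a T t z i = p i * (\<Prod>j<M. S i j) / ?D" for i
    unfolding p_RL_def S_def me_fun_def ..
  have "?lhs = (\<Sum>i\<in>idx_set L M. p i * (\<Prod>j<M. S i j) / ?D * (\<Prod>j<M. ?W i j / S i j))"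
    by (simp only: p_RL factor cong: sum.cong prod.cong)
  also have "\<dots> = (\<Sum>i\<in>idx_set L M. p i * (\<Prod>j<M. ?W i j)) / ?D"
    using me_fun_moment_eq_0[OF triples[OF idx_set_lessD] z]
    by (intro sum_prod_divide_cancel) (simp add: S_def)
  finally show ?thesis .
qed

theorem theorem8:
  fixes P :: "'w measure" and X :: "'w \<Rightarrow> nat \<Rightarrow> real"
    and L M :: nat and n :: "nat \<Rightarrow> nat"
    and a :: "nat \<Rightarrow> real vec" and T :: "nat \<Rightarrow> real mat" and t :: "nat \<Rightarrow> real vec"
    and p :: "(nat \<Rightarrow> nat) \<Rightarrow> real"
    and z :: "nat \<Rightarrow> real" and r :: "nat \<Rightarrow> nat"
  assumes "prob_space P"
    and "L \<ge> 1" and "M \<ge> 1"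
    and triples: "\<And>k. k < L \<Longrightarrow> ME_triple (n k) (a k) (T k) (t k)"
    and p_sum: "(\<Sum>i\<in>idx_set L M. p i) = 1"
    and f_nonneg: "\<And>x. (\<forall>j<M. 0 \<le> x j) \<Longrightarrow> mmeam_fun L M p a T t x \<ge> 0"
    and dist: "distributed P (PiM {..<M} (\<lambda>_. lborel)) X
                 (\<lambda>x. ennreal (mmeam_fun L M p a T t x))"
    and z_nonneg: "\<And>j. j < M \<Longrightarrow> 0 \<le> z j"
    and pos: "measure P {\<omega> \<in> space P. \<forall>j<M. X \<omega> j > z j} > 0"
  shows "cond_exp_event P (\<lambda>\<omega>. \<Prod>j<M. (X \<omega> j - z j) ^ r j)
             {\<omega> \<in> space P. \<forall>j<M. X \<omega> j > z j}
         = (\<Sum>i\<in>idx_set L M. p_RL L M p a T t z i *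
              (\<Prod>j<M. fact (r j) *
                  scalar_prod (alpha_RL (a (i j)) (T (i j)) (t (i j)) (z j))
                              ((minv (- T (i j)) ^\<^sub>m (r j + 1)) *\<^sub>v t (i j))))"
proof -
  note moment = integral_indicator_moment_mmeam[OF triples f_nonneg dist z_nonneg]
  have "measure P {\<omega> \<in> space P. \<forall>j<M. X \<omega> j > z j}
      = (\<integral>\<omega>. indicator {\<omega> \<in> space P. \<forall>j<M. X \<omega> j > z j} \<omega> * (\<Prod>j<M. (X \<omega> j - z j) ^ 0) \<partial>P)"
    by (simp add: Int_absorb2)
  also have "\<dots> = (\<Sum>i\<in>idx_set L M. p i * (\<Prod>j<M. fact 0 *
      me_fun (a (i j)) (T (i j)) ((minv (- T (i j)) ^\<^sub>m (0 + 1)) *\<^sub>v t (i j)) (z j)))"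
    by (rule moment)
  finally have survival: "measure P {\<omega> \<in> space P. \<forall>j<M. X \<omega> j > z j}
      = (\<Sum>i\<in>idx_set L M. p i * (\<Prod>j<M. me_fun (a (i j)) (T (i j)) (me_l (T (i j)) (t (i j))) (z j)))"
    unfolding me_l_eq_pow by simp
  show ?thesis
    unfolding cond_exp_event_def
    by (simp only: survival moment) (rule sum_p_RL_alpha_RL_eq[OF triples z_nonneg, symmetric])
qed

end
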